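(* Let $\alpha_1,\dots,\alpha_K\in\mathbb R^d\setminus\{0\}$ be distinct and $\gamma_1,\dots,\gamma_M>0$ ($M\le K$). Then there is at most one vector $\hat\theta\in\mathbb R^d$ with the following properties: (i) $\alpha_k^{T}\hat\theta=\gamma_k$ for $k=1,\dots,M$; (ii) there exists $\{\alpha_{j_1},\dots,\alpha_{j_p}\}\subseteq\{\alpha_{M+1},\dots,\alpha_K\}$ such that (a) $\alpha_1,\dots,\alpha_M,\alpha_{j_1},\dots,\alpha_{j_p}$ are linearly independent; (b) $\hat\theta\in\mathrm{span}\{\alpha_1,\dots,\alpha_M,\alpha_{j_1},\dots,\alpha_{j_p}\}$ and in the expansion of $\hat\theta$ in this basis the coefficient of each $\alpha_{j_m}$, $m=1,\dots,p$, is negative; (c) $\alpha_{j_m}^{T}\hat\theta=0$ for $m=1,\dots,p$; (d) $\alpha^{T}\hat\theta<0$ for every $\alpha\in\{\alpha_{M+1},\dots,\alpha_K\}\setminus\{\alpha_{j_1},\dots,\alpha_{j_p}\}$. (Uniqueness holds even if different vectors use different subsets in (ii).) *)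

theory Defs
  imports "HOL-Analysis.Analysis"
begin

text \<open>Vectors alpha_1..alpha_K are indexed by nat, indices 1..K.\<close>

definition good_vector ::
  "(nat \<Rightarrow> 'a::euclidean_space) \<Rightarrow> (nat \<Rightarrow> real) \<Rightarrow> nat \<Rightarrow> nat \<Rightarrow> 'a \<Rightarrow> bool" where
  "good_vector \<alpha> \<gamma> M K \<theta> \<longleftrightarrow>
     (\<forall>k\<in>{1..M}. \<alpha> k \<bullet> \<theta> = \<gamma> k) \<and>
     (\<exists>J. J \<subseteq> {M+1..K} \<and>
        independent (\<alpha> ` ({1..M} \<union> J)) \<and>
        (\<exists>c. \<theta> = (\<Sum>i\<in>{1..M} \<union> J. c i *\<^sub>R \<alpha> i) \<and> (\<forall>j\<in>J. c j < 0)) \<and>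
        (\<forall>j\<in>J. \<alpha> j \<bullet> \<theta> = 0) \<and>
        (\<forall>k\<in>{M+1..K} - J. \<alpha> k \<bullet> \<theta> < 0))"

end

theory Submission
  imports Defs
begin

text \<open>Condition (ii) is a KKT certificate: a good vector \<open>\<theta>\<close> lies in the polyhedron
  \<open>P = {x. \<alpha> k \<bullet> x = \<gamma> k for k \<le> M, \<alpha> k \<bullet> x \<le> 0 for M < k \<le> K}\<close>, and writing \<open>\<theta>\<close> as
  a combination of the \<open>\<alpha> k\<close> with nonpositive weights on the active constraints gives
  \<open>\<theta> \<bullet> (x - \<theta>) \<ge> 0\<close> for every \<open>x \<in> P\<close>, i.e. \<open>\<theta>\<close> is the point of \<open>P\<close> of minimal norm.
  Two points of \<open>P\<close> with this property coincide.\<close>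

lemma inner_variational_eq:
  fixes x y :: "'a::real_inner"
  assumes "x \<bullet> (y - x) \<ge> 0" and "y \<bullet> (x - y) \<ge> 0"
  shows "x = y"
proof -
  have "(x - y) \<bullet> (x - y) = - (x \<bullet> (y - x)) - y \<bullet> (x - y)"
    by (simp add: inner_diff_left inner_diff_right inner_commute)
  with assms have "(x - y) \<bullet> (x - y) \<le> 0" by linarith
  then have "(x - y) \<bullet> (x - y) = 0" using inner_ge_zero order_antisym by blast
  then show ?thesis by simp
qed

lemma good_vector_feasible:
  assumes "good_vector \<alpha> \<gamma> M K \<theta>"
  shows "\<forall>k\<in>{1..M}. \<alpha> k \<bullet> \<theta> = \<gamma> k" and "\<forall>k\<in>{M+1..K}. \<alpha> k \<bullet> \<theta> \<le> 0"
proof -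
  from assms obtain J where "\<forall>k\<in>{1..M}. \<alpha> k \<bullet> \<theta> = \<gamma> k"
    and "\<forall>j\<in>J. \<alpha> j \<bullet> \<theta> = 0" and "\<forall>k\<in>{M+1..K} - J. \<alpha> k \<bullet> \<theta> < 0"
    unfolding good_vector_def by blast
  then show "\<forall>k\<in>{1..M}. \<alpha> k \<bullet> \<theta> = \<gamma> k" and "\<forall>k\<in>{M+1..K}. \<alpha> k \<bullet> \<theta> \<le> 0"
    by (auto intro: less_imp_le)
qed

lemma good_vector_inner_diff_nonneg:
  assumes good: "good_vector \<alpha> \<gamma> M K \<theta>"
    and eq: "\<forall>k\<in>{1..M}. \<alpha> k \<bullet> x = \<gamma> k"
    and le: "\<forall>k\<in>{M+1..K}. \<alpha> k \<bullet> x \<le> 0"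
  shows "\<theta> \<bullet> (x - \<theta>) \<ge> 0"
proof -
  from good obtain J c where J: "J \<subseteq> {M+1..K}"
    and \<theta>: "\<theta> = (\<Sum>i\<in>{1..M} \<union> J. c i *\<^sub>R \<alpha> i)" and c_neg: "\<forall>j\<in>J. c j < 0"
    and active: "\<forall>j\<in>J. \<alpha> j \<bullet> \<theta> = 0"
    unfolding good_vector_def by blast
  have "\<theta> \<bullet> (x - \<theta>) = (\<Sum>i\<in>{1..M} \<union> J. c i * (\<alpha> i \<bullet> (x - \<theta>)))"
    by (subst (1) \<theta>) (simp add: inner_sum_left)
  also have "\<dots> \<ge> 0"
  proof (rule sum_nonneg)
    fix i assume i: "i \<in> {1..M} \<union> J"
    show "0 \<le> c i * (\<alpha> i \<bullet> (x - \<theta>))"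
    proof (cases "i \<in> {1..M}")
      case True
      then show ?thesis
        using eq good_vector_feasible(1)[OF good] by (simp add: inner_diff_right)
    next
      case False
      with i J have "c i < 0" "\<alpha> i \<bullet> \<theta> = 0" "\<alpha> i \<bullet> x \<le> 0"
        using c_neg active le by auto
      then show ?thesis by (simp add: inner_diff_right mult_nonpos_nonpos)
    qed
  qed
  finally show ?thesis .
qed

theorem lemma3:
  fixes \<alpha> :: "nat \<Rightarrow> 'a::euclidean_space" and \<gamma> :: "nat \<Rightarrow> real" and M K :: nat
  assumes "M \<le> K"
    and "inj_on \<alpha> {1..K}"
    and "\<And>k. k \<in> {1..K} \<Longrightarrow> \<alpha> k \<noteq> 0"
    and "\<And>k. k \<in> {1..M} \<Longrightarrow> \<gamma> k > 0"
  shows "\<forall>\<theta>1 \<theta>2. good_vector \<alpha> \<gamma> M K \<theta>1 \<and> good_vector \<alpha> \<gamma> M K \<theta>2 \<longrightarrow> \<theta>1 = \<theta>2"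
proof (intro allI impI)
  fix \<theta>1 \<theta>2 :: 'a
  assume "good_vector \<alpha> \<gamma> M K \<theta>1 \<and> good_vector \<alpha> \<gamma> M K \<theta>2"
  then have g1: "good_vector \<alpha> \<gamma> M K \<theta>1" and g2: "good_vector \<alpha> \<gamma> M K \<theta>2" by simp_all
  show "\<theta>1 = \<theta>2"
  proof (rule inner_variational_eq)
    show "\<theta>1 \<bullet> (\<theta>2 - \<theta>1) \<ge> 0"
      using good_vector_inner_diff_nonneg[OF g1 good_vector_feasible[OF g2]] .
    show "\<theta>2 \<bullet> (\<theta>1 - \<theta>2) \<ge> 0"
      using good_vector_inner_diff_nonneg[OF g2 good_vector_feasible[OF g1]] .
  qed
qed

end
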